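(* Let $\mathbb I$ be an index coding problem which admits a valid scalar linear index code of length $3$ over a finite field $\mathbb F$. Then for every type-2 alignment set of $\mathbb I$ with message set ${\cal W}'$, the restricted problem ${\mathbb I}_{{\cal W}'}$ admits a valid scalar linear index code of length $2$ over $\mathbb F$, and there are no ${\cal W}'$-restricted internal conflicts.
   Context: Index coding setup: An index coding problem $\mathbb I$ over a finite field $\mathbb F$ consists of a set of messages ${\cal W}=\{W_1,\dots,W_n\}$ (each message is a symbol of $\mathbb F$ in the scalar setting), a set of receivers $[1:T]$, and for each receiver $j$ a demand set $D(j)\subseteq{\cal W}$ and a side-information set $S(j)\subseteq {\cal W}\setminus D(j)$. Every message is demanded by at least one receiver. For a receiver $j$ and $W_k\in D(j)$, the interfering set is $Interf_k(j)={\cal W}\setminus(\{W_k\}\cup S(j))$; if $W_k\notin D(j)$ then $Interf_k(j)=\emptyset$. A scalar linear index code of length $L$ over $\mathbb F$ is an assignment of vectors $V_1,\dots,V_n\in\mathbb F^L$ to the messages; the source broadcasts $\sum_{i=1}^n V_iW_i\in\mathbb F^L$, and the code is valid if every receiver $j$ can recover every message of $D(j)$ from the broadcast codeword and the messages in $S(j)$. Two distinct messages $W_i,W_k$ are in conflict if there is a receiver $j$ with $W_k\in D(j)$ and $W_i\in Interf_k(j)$, or a receiver $j$ with $W_i\in D(j)$ and $W_k\in Interf_i(j)$. Alignment graph: the graph with vertex set ${\cal W}$ in which distinct $W_a,W_b$ are adjacent if there exist a receiver $j$ and a message $W_k\in D(j)$ with $W_k\notin\{W_a,W_b\}$ and $W_a,W_b\notin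 S(j)$. An alignment set is the vertex set of a connected component of the alignment graph. An internal conflict is a conflict between two messages lying in the same alignment set. A triangular interfering set is a subset ${\cal W}''\subseteq{\cal W}$ with $|{\cal W}''|=3$ such that there exist a receiver $j$ and a message $W_k\in D(j)\setminus{\cal W}''$ with ${\cal W}''\subseteq Interf_k(j)$, and at least two messages of ${\cal W}''$ are in conflict. Two distinct triangular interfering sets ${\cal W}_1,{\cal W}_2$ are adjacent if ${\cal W}_1\cap{\cal W}_2=\{W_a,W_b\}$ with $W_a,W_b$ in conflict. Two triangular interfering sets are connected if there is a finite sequence of triangular interfering sets starting at one and ending at the other in which consecutive sets are adjacent (every set is connected to itself). A type-2 alignment set is a maximal collection of pairwise connected triangular interfering sets (an equivalence class under connectedness); its message set is the union of its triangular interfering sets. Restricted problem: for ${\cal W}'\subseteq{\cal W}$, the ${\cal W}'$-restricted index coding problem ${\mathbb I}_{{\cal W}'}$ has message set ${\cal W}'$, receivers the receivers $j$ of $\mathbb I$ with $D(j)\cap{\cal W}'\neq\emptyset$, and for each such $j$ demand set $D(j)\cap{\cal W}'$ and side-information set $S(j)\cap{\cal W}'$. The ${\cal W}'$-restricted alignment sets and internal conflicts are the alignment sets and internal conflicts of ${\mathbb I}_{{\cal W}'}$ (conflicts being computed in ${\mathbb I}_{{\cal W}'}$). *)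

theory Defs
  imports Main
begin

definition ic_problem :: "'m set \<Rightarrow> 'r set \<Rightarrow> ('r \<Rightarrow> 'm set) \<Rightarrow> ('r \<Rightarrow> 'm set) \<Rightarrow> bool" where
  "ic_problem W R D S \<longleftrightarrow> finite W \<and> finite R \<and>
     (\<forall>j\<in>R. D j \<subseteq> W \<and> S j \<subseteq> W - D j) \<and>
     (\<forall>k\<in>W. \<exists>j\<in>R. k \<in> D j)"

text \<open>Broadcast codeword of a scalar linear code V of length L (vectors in F^L are
  functions nat => F, only coordinates below L matter).\<close>
definition codeword :: "'m set \<Rightarrow> nat \<Rightarrow> ('m \<Rightarrow> nat \<Rightarrow> 'f::field) \<Rightarrow> ('m \<Rightarrow> 'f) \<Rightarrow> nat \<Rightarrow> 'f" where
  "codeword W L V w = (\<lambda>l. if l < L then (\<Sum>i\<in>W. w i * V i l) else 0)"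

definition valid_linear_code ::
  "'m set \<Rightarrow> 'r set \<Rightarrow> ('r \<Rightarrow> 'm set) \<Rightarrow> ('r \<Rightarrow> 'm set) \<Rightarrow> nat \<Rightarrow> ('m \<Rightarrow> nat \<Rightarrow> 'f::field) \<Rightarrow> bool" where
  "valid_linear_code W R D S L V \<longleftrightarrow>
     (\<forall>j\<in>R. \<forall>k\<in>D j. \<exists>g. \<forall>w::'m \<Rightarrow> 'f.
        g (codeword W L V w) (\<lambda>i. if i \<in> S j then w i else 0) = w k)"

definition interf :: "'m set \<Rightarrow> ('r \<Rightarrow> 'm set) \<Rightarrow> ('r \<Rightarrow> 'm set) \<Rightarrow> 'r \<Rightarrow> 'm \<Rightarrow> 'm set" where
  "interf W D S j k = (if k \<in> D j then W - ({k} \<union> S j) else {})"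

definition in_conflict ::
  "'m set \<Rightarrow> 'r set \<Rightarrow> ('r \<Rightarrow> 'm set) \<Rightarrow> ('r \<Rightarrow> 'm set) \<Rightarrow> 'm \<Rightarrow> 'm \<Rightarrow> bool" where
  "in_conflict W R D S a b \<longleftrightarrow> a \<noteq> b \<and>
     ((\<exists>j\<in>R. b \<in> D j \<and> a \<in> interf W D S j b) \<or> (\<exists>j\<in>R. a \<in> D j \<and> b \<in> interf W D S j a))"

definition align_adj ::
  "'m set \<Rightarrow> 'r set \<Rightarrow> ('r \<Rightarrow> 'm set) \<Rightarrow> ('r \<Rightarrow> 'm set) \<Rightarrow> ('m \<times> 'm) set" where
  "align_adj W R D S = {(a, b). a \<in> W \<and> b \<in> W \<and> a \<noteq> b \<and>
     (\<exists>j\<in>R. \<exists>k\<in>D j. k \<notin> {a, b} \<and> a \<notin> S j \<and> b \<notin> S j)}"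

definition same_alignment_set ::
  "'m set \<Rightarrow> 'r set \<Rightarrow> ('r \<Rightarrow> 'm set) \<Rightarrow> ('r \<Rightarrow> 'm set) \<Rightarrow> 'm \<Rightarrow> 'm \<Rightarrow> bool" where
  "same_alignment_set W R D S a b \<longleftrightarrow> a \<in> W \<and> b \<in> W \<and> (a, b) \<in> (align_adj W R D S)\<^sup>*"

definition internal_conflict ::
  "'m set \<Rightarrow> 'r set \<Rightarrow> ('r \<Rightarrow> 'm set) \<Rightarrow> ('r \<Rightarrow> 'm set) \<Rightarrow> 'm \<Rightarrow> 'm \<Rightarrow> bool" where
  "internal_conflict W R D S a b \<longleftrightarrow> in_conflict W R D S a b \<and> same_alignment_set W R D S a b"

definition triangular_interfering ::
  "'m set \<Rightarrow> 'r set \<Rightarrow> ('r \<Rightarrow> 'm set) \<Rightarrow> ('r \<Rightarrow> 'm set) \<Rightarrow> 'm set \<Rightarrow> bool" where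
  "triangular_interfering W R D S T \<longleftrightarrow> T \<subseteq> W \<and> card T = 3 \<and>
     (\<exists>j\<in>R. \<exists>k\<in>D j - T. T \<subseteq> interf W D S j k) \<and>
     (\<exists>a\<in>T. \<exists>b\<in>T. in_conflict W R D S a b)"

definition tri_adj ::
  "'m set \<Rightarrow> 'r set \<Rightarrow> ('r \<Rightarrow> 'm set) \<Rightarrow> ('r \<Rightarrow> 'm set) \<Rightarrow> ('m set \<times> 'm set) set" where
  "tri_adj W R D S = {(T1, T2). triangular_interfering W R D S T1 \<and> triangular_interfering W R D S T2 \<and>
     T1 \<noteq> T2 \<and> (\<exists>a b. T1 \<inter> T2 = {a, b} \<and> in_conflict W R D S a b)}"

definition type2_alignment_set ::
  "'m set \<Rightarrow> 'r set \<Rightarrow> ('r \<Rightarrow> 'm set) \<Rightarrow> ('r \<Rightarrow> 'm set) \<Rightarrow> 'm set set \<Rightarrow> bool" where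
  "type2_alignment_set W R D S C \<longleftrightarrow>
     (\<exists>T0. triangular_interfering W R D S T0 \<and> C = {T. (T0, T) \<in> (tri_adj W R D S)\<^sup>*})"

definition restr_receivers :: "'m set \<Rightarrow> 'r set \<Rightarrow> ('r \<Rightarrow> 'm set) \<Rightarrow> 'r set" where
  "restr_receivers W' R D = {j \<in> R. D j \<inter> W' \<noteq> {}}"

definition restr_map :: "'m set \<Rightarrow> ('r \<Rightarrow> 'm set) \<Rightarrow> 'r \<Rightarrow> 'm set" where
  "restr_map W' X = (\<lambda>j. X j \<inter> W')"

end

theory Submission
  imports Defs
begin

text \<open>A scalar linear code is valid exactly when every linear dependency among the coding
  vectors of messages outside a receiver's side information has zero coefficient on each
  message that receiver demands. In dimension 3 this makes the vectors of a conflicting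
  pair independent and those of an interfering triangle coplanar, so walking through a
  type-2 alignment set keeps every vector in the plane of the first conflicting pair;
  dropping a suitable coordinate yields a valid code of length 2. In dimension 2 the
  vectors along an alignment path are pairwise parallel, while conflicting vectors are
  not, so no internal conflict survives.\<close>

lemma valid_linear_code_iff_kernel:
  "valid_linear_code W R D S L (V :: 'm \<Rightarrow> nat \<Rightarrow> 'f::field) \<longleftrightarrow>
     (\<forall>j\<in>R. \<forall>k\<in>D j. \<forall>w :: 'm \<Rightarrow> 'f. (\<forall>i\<in>S j. w i = 0) \<longrightarrow>
        (\<forall>l<L. (\<Sum>i\<in>W. w i * V i l) = 0) \<longrightarrow> w k = 0)"
  (is "?valid \<longleftrightarrow> ?kernel")
proof
  assume ?valid
  show ?kernel
  proof (intro ballI allI impI)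
    fix j k and w :: "'m \<Rightarrow> 'f"
    assume "j \<in> R" "k \<in> D j" and S: "\<forall>i\<in>S j. w i = 0"
      and sums: "\<forall>l<L. (\<Sum>i\<in>W. w i * V i l) = 0"
    then obtain g where g: "\<And>u. g (codeword W L V u) (\<lambda>i. if i \<in> S j then u i else 0) = u k"
      using \<open>?valid\<close> unfolding valid_linear_code_def by blast
    have "codeword W L V w = codeword W L V (\<lambda>_. 0)"
      using sums by (auto simp: codeword_def)
    moreover have "(\<lambda>i. if i \<in> S j then w i else 0) = (\<lambda>i. if i \<in> S j then 0 else 0)"
      using S by auto
    ultimately show "w k = 0"
      using g[of w] g[of "\<lambda>_. 0"] by simp
  qed
next
  assume kernel: ?kernel
  show ?valid
    unfolding valid_linear_code_def
  proof (intro ballI)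
    fix j k assume j: "j \<in> R" and k: "k \<in> D j"
    \<comment> \<open>Decode by choosing any message vector consistent with the codeword and the
      side information.\<close>
    let ?consistent = "\<lambda>c s u. codeword W L V u = c \<and> (\<lambda>i. if i \<in> S j then u i else 0) = s"
    have "(SOME u. ?consistent (codeword W L V w) (\<lambda>i. if i \<in> S j then w i else 0) u) k = w k"
      for w :: "'m \<Rightarrow> 'f"
    proof -
      define u
        where "u = (SOME u. ?consistent (codeword W L V w) (\<lambda>i. if i \<in> S j then w i else 0) u)"
      have u: "?consistent (codeword W L V w) (\<lambda>i. if i \<in> S j then w i else 0) u"
        unfolding u_def by (rule someI[where x = w]) simp
      have "w i - u i = 0" if "i \<in> S j" for i
        using fun_cong[OF conjunct2[OF u], of i] that by simp
      moreover have "(\<Sum>i\<in>W. (w i - u i) * V i l) = 0" if "l < L" for l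
        using fun_cong[OF conjunct1[OF u], of l] that
        by (simp add: codeword_def left_diff_distrib sum_subtractf)
      ultimately have "w k - u k = 0"
        using kernel[rule_format, OF j k, of "\<lambda>i. w i - u i"] by simp
      then show ?thesis
        by (simp add: u_def)
    qed
    then show "\<exists>g. \<forall>w :: 'm \<Rightarrow> 'f. g (codeword W L V w) (\<lambda>i. if i \<in> S j then w i else 0) = w k"
      by (intro exI[where x = "\<lambda>c s. (SOME u. ?consistent c s u) k"]) simp
  qed
qed

lemma valid_linear_code_dependency:
  fixes V :: "'m \<Rightarrow> nat \<Rightarrow> 'f::field"
  assumes "valid_linear_code W R D S L V" "finite W" "j \<in> R" "k \<in> D j"
    and "A \<subseteq> W" "A \<inter> S j = {}" "k \<in> A"
    and "\<forall>l<L. (\<Sum>i\<in>A. c i * V i l) = 0"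
  shows "c k = 0"
proof -
  define w where "w i = (if i \<in> A then c i else 0)" for i
  have "(\<Sum>i\<in>W. w i * V i l) = (\<Sum>i\<in>A. c i * V i l)" for l
  proof -
    have "(\<Sum>i\<in>W. w i * V i l) = (\<Sum>i\<in>A. w i * V i l)"
      using assms(2,5) by (intro sum.mono_neutral_right) (auto simp: w_def)
    also have "\<dots> = (\<Sum>i\<in>A. c i * V i l)"
      by (simp add: w_def)
    finally show ?thesis .
  qed
  moreover have "\<forall>i\<in>S j. w i = 0"
    using assms(6) by (auto simp: w_def)
  ultimately have "w k = 0"
    using assms(1)[unfolded valid_linear_code_iff_kernel, rule_format, OF assms(3,4), of w] assms(8)
    by simp
  then show ?thesis
    using assms(7) by (simp add: w_def)
qed

lemma valid_linear_code_restrict: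
  fixes V :: "'m \<Rightarrow> nat \<Rightarrow> 'f::field"
  assumes valid: "valid_linear_code W R D S L V" and "finite W" "W' \<subseteq> W"
  shows "valid_linear_code W' (restr_receivers W' R D) (restr_map W' D) (restr_map W' S) L V"
  unfolding valid_linear_code_iff_kernel
proof (intro ballI allI impI)
  fix j k and w :: "'m \<Rightarrow> 'f"
  assume "j \<in> restr_receivers W' R D" "k \<in> restr_map W' D j"
    and side: "\<forall>i\<in>restr_map W' S j. w i = 0" and sums: "\<forall>l<L. (\<Sum>i\<in>W'. w i * V i l) = 0"
  then have j: "j \<in> R" "k \<in> D j" "k \<in> W'"
    by (auto simp: restr_receivers_def restr_map_def)
  show "w k = 0"
  proof (cases "k \<in> S j")
    case True
    with side j show ?thesis by (simp add: restr_map_def)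
  next
    case False
    have "(\<Sum>i\<in>W' - S j. w i * V i l) = (\<Sum>i\<in>W'. w i * V i l)" for l
      using side \<open>finite W\<close> \<open>W' \<subseteq> W\<close>
      by (intro sum.mono_neutral_left) (auto simp: restr_map_def intro: finite_subset)
    with False j sums show ?thesis
      using \<open>W' \<subseteq> W\<close>
      by (intro valid_linear_code_dependency[OF valid \<open>finite W\<close> j(1,2), where A = "W' - S j"])
        auto
  qed
qed

lemma ic_problem_restrict:
  assumes "ic_problem W R D S" "W' \<subseteq> W"
  shows "ic_problem W' (restr_receivers W' R D) (restr_map W' D) (restr_map W' S)"
  using assms unfolding ic_problem_def restr_receivers_def restr_map_def
  by (auto intro: finite_subset) blast

lemma code_vector_nonzero:
  fixes V :: "'m \<Rightarrow> nat \<Rightarrow> 'f::field"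
  assumes ic: "ic_problem W R D S" and valid: "valid_linear_code W R D S L V" and "x \<in> W"
  shows "\<exists>l<L. V x l \<noteq> 0"
proof (rule ccontr)
  assume zero: "\<not> (\<exists>l<L. V x l \<noteq> 0)"
  obtain j where j: "j \<in> R" "x \<in> D j" "x \<notin> S j"
    using ic \<open>x \<in> W\<close> unfolding ic_problem_def by blast
  have "(1::'f) = 0"
    using zero ic \<open>x \<in> W\<close> j
    by (intro valid_linear_code_dependency[OF valid _ j(1,2), where A = "{x}" and c = "\<lambda>_. 1"])
      (auto simp: ic_problem_def)
  then show False by simp
qed

lemma conflict_not_parallel:
  fixes V :: "'m \<Rightarrow> nat \<Rightarrow> 'f::field"
  assumes ic: "ic_problem W R D S" and valid: "valid_linear_code W R D S L V"
    and "in_conflict W R D S a b"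
  shows "\<exists>l<L. \<exists>m<L. V a l * V b m \<noteq> V a m * V b l"
proof -
  have fin: "finite W"
    using ic by (simp add: ic_problem_def)
  have independent: "\<exists>l<L. \<exists>m<L. V x l * V y m \<noteq> V x m * V y l"
    if j: "j \<in> R" "y \<in> D j" "x \<in> interf W D S j y" for x y j
  proof (rule ccontr)
    assume parallel: "\<not> (\<exists>l<L. \<exists>m<L. V x l * V y m \<noteq> V x m * V y l)"
    have x: "x \<in> W" "x \<noteq> y" "x \<notin> S j" and y: "y \<in> W" "y \<notin> S j"
      using j ic unfolding interf_def ic_problem_def by auto
    obtain m where m: "m < L" "V x m \<noteq> 0"
      using code_vector_nonzero[OF ic valid x(1)] by blast
    \<comment> \<open>With all 2\<times>2 minors zero, V y m \<cdot> V x - V x m \<cdot> V y = 0 is a dependency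
      whose coefficient on the demanded y is nonzero.\<close>
    define coeff where "coeff i = (if i = x then V y m else - V x m)" for i
    have "coeff y = 0"
      using parallel m x y
      by (intro valid_linear_code_dependency[OF valid fin j(1,2), where A = "{x, y}"])
        (auto simp: coeff_def algebra_simps)
    with m x show False
      by (simp add: coeff_def)
  qed
  have swap: "(\<exists>l<L. \<exists>m<L. V b l * V a m \<noteq> V b m * V a l) \<Longrightarrow> ?thesis"
    by (metis mult.commute)
  from assms(3) show ?thesis
    unfolding in_conflict_def using independent swap by blast
qed

lemma all_less_2_iff: "(\<forall>l<(2::nat). P l) \<longleftrightarrow> P 0 \<and> P 1"
  by (auto simp: eval_nat_numeral less_Suc_eq)

lemma all_less_3_iff: "(\<forall>l<(3::nat). P l) \<longleftrightarrow> P 0 \<and> P 1 \<and> P 2"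
  by (auto simp: eval_nat_numeral less_Suc_eq)

definition det2 :: "(nat \<Rightarrow> 'f::field) \<Rightarrow> (nat \<Rightarrow> 'f) \<Rightarrow> 'f" where
  "det2 x y = x 0 * y 1 - x 1 * y 0"

lemma det2_eq_0_iff: "det2 x y = 0 \<longleftrightarrow> (\<forall>l<2. \<forall>m<2. x l * y m = x m * y l)"
  by (auto simp: det2_def all_less_2_iff algebra_simps)

lemma det2_trans:
  assumes "det2 x y = 0" "det2 y z = 0" "l < 2" "y l \<noteq> 0"
  shows "det2 x z = (0::'f::field)"
proof -
  have "det2 x z * y l = det2 y z * x l + det2 x y * z l"
    using \<open>l < 2\<close> all_less_2_iff[of "\<lambda>l. det2 x z * y l = det2 y z * x l + det2 x y * z l"]
    by (auto simp: det2_def algebra_simps)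
  with assms show ?thesis by simp
qed

lemma align_adj_det2:
  fixes V :: "'m \<Rightarrow> nat \<Rightarrow> 'f::field"
  assumes ic: "ic_problem W R D S" and valid: "valid_linear_code W R D S 2 V"
    and "(x, y) \<in> align_adj W R D S"
  shows "det2 (V x) (V y) = 0"
proof -
  obtain j k where j: "j \<in> R" "k \<in> D j" "k \<noteq> x" "k \<noteq> y" "x \<notin> S j" "y \<notin> S j"
    and xy: "x \<in> W" "y \<in> W" "x \<noteq> y"
    using assms(3) unfolding align_adj_def by blast
  have k: "k \<in> W" "k \<notin> S j" "finite W"
    using ic j unfolding ic_problem_def by blast+
  \<comment> \<open>Cramer's rule: any three vectors of the plane are dependent with these cofactors.\<close>
  define c where "c i = (if i = x then det2 (V y) (V k) else if i = y then - det2 (V x) (V k)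
    else det2 (V x) (V y))" for i
  have "c k = 0"
  proof (rule valid_linear_code_dependency[OF valid k(3) j(1,2), where A = "{x, y, k}"])
    show "\<forall>l<2. (\<Sum>i\<in>{x, y, k}. c i * V i l) = 0"
      using j xy by (auto simp: c_def det2_def all_less_2_iff algebra_simps)
  qed (use j xy k in auto)
  with j show ?thesis
    by (simp add: c_def)
qed

theorem length2_code_no_internal_conflict:
  fixes V :: "'m \<Rightarrow> nat \<Rightarrow> 'f::field"
  assumes ic: "ic_problem W R D S" and valid: "valid_linear_code W R D S 2 V"
  shows "\<not> internal_conflict W R D S a b"
proof
  assume "internal_conflict W R D S a b"
  then have conflict: "in_conflict W R D S a b" and "(a, b) \<in> (align_adj W R D S)\<^sup>*"
    unfolding internal_conflict_def same_alignment_set_def by auto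
  from \<open>(a, b) \<in> _\<close> have "det2 (V a) (V b) = 0"
  proof (induction rule: rtrancl_induct)
    case base
    show ?case by (simp add: det2_def)
  next
    case (step y z)
    have "y \<in> W"
      using step(2) by (simp add: align_adj_def)
    then obtain l where "l < 2" "V y l \<noteq> 0"
      using code_vector_nonzero[OF ic valid] by blast
    with step align_adj_det2[OF ic valid] show ?case
      using det2_trans by blast
  qed
  then show False
    using conflict_not_parallel[OF ic valid conflict] unfolding det2_eq_0_iff by blast
qed

definition dot3 :: "(nat \<Rightarrow> 'f::field) \<Rightarrow> (nat \<Rightarrow> 'f) \<Rightarrow> 'f" where
  "dot3 x y = x 0 * y 0 + x 1 * y 1 + x 2 * y 2"

definition cross3 :: "(nat \<Rightarrow> 'f::field) \<Rightarrow> (nat \<Rightarrow> 'f) \<Rightarrow> nat \<Rightarrow> 'f" where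
  "cross3 x y = (\<lambda>l. if l = 0 then x 1 * y 2 - x 2 * y 1
     else if l = 1 then x 2 * y 0 - x 0 * y 2 else x 0 * y 1 - x 1 * y 0)"

lemma cross3_eq_0_iff:
  "(\<forall>i<3. cross3 x y i = 0) \<longleftrightarrow> (\<forall>l<3. \<forall>m<3. x l * y m = x m * (y l :: 'f::field))"
  by (auto simp: cross3_def all_less_3_iff algebra_simps)

lemma dot3_cross3_left: "dot3 (cross3 x y) x = 0"
  and dot3_cross3_right: "dot3 (cross3 x y) y = 0"
  by (simp_all add: dot3_def cross3_def algebra_simps)

lemma cross3_cofactor_expansion:
  fixes a b c k :: "nat \<Rightarrow> 'f::field"
  assumes "l < 3"
  shows "dot3 (cross3 b c) k * a l - dot3 (cross3 a c) k * b l + dot3 (cross3 a b) k * c l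
    = dot3 (cross3 a b) c * k l"
  using assms all_less_3_iff[of "\<lambda>l. dot3 (cross3 b c) k * a l - dot3 (cross3 a c) k * b l
    + dot3 (cross3 a b) k * c l = dot3 (cross3 a b) c * k l"]
  by (auto simp: dot3_def cross3_def algebra_simps)

lemma cross3_dot3_expansion:
  fixes n a b c :: "nat \<Rightarrow> 'f::field"
  assumes "i < 3"
  shows "dot3 n c * cross3 a b i + dot3 n a * cross3 b c i + dot3 n b * cross3 c a i
    = dot3 (cross3 a b) c * n i"
  using assms all_less_3_iff[of "\<lambda>i. dot3 n c * cross3 a b i + dot3 n a * cross3 b c i
    + dot3 n b * cross3 c a i = dot3 (cross3 a b) c * n i"]
  by (auto simp: dot3_def cross3_def algebra_simps)

lemma dot3_eq_0_if_coplanar: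
  fixes n a b c :: "nat \<Rightarrow> 'f::field"
  assumes "dot3 n a = 0" "dot3 n b = 0" "dot3 (cross3 a b) c = 0" "i < 3" "cross3 a b i \<noteq> 0"
  shows "dot3 n c = 0"
  using cross3_dot3_expansion[OF \<open>i < 3\<close>, of n c a b] assms by simp

lemma interf_triangle_coplanar:
  fixes V :: "'m \<Rightarrow> nat \<Rightarrow> 'f::field"
  assumes ic: "ic_problem W R D S" and valid: "valid_linear_code W R D S 3 V"
    and j: "j \<in> R" "k \<in> D j" and abc: "{a, b, c} \<subseteq> interf W D S j k"
    and distinct: "a \<noteq> b" "a \<noteq> c" "b \<noteq> c" and "k \<notin> {a, b, c}"
  shows "dot3 (cross3 (V a) (V b)) (V c) = 0"
proof -
  have in_W: "a \<in> W" "b \<in> W" "c \<in> W" "a \<notin> S j" "b \<notin> S j" "c \<notin> S j"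
    using abc j unfolding interf_def by auto
  have k: "k \<in> W" "k \<notin> S j" "finite W"
    using ic j unfolding ic_problem_def by blast+
  define coeff where "coeff i = (if i = a then dot3 (cross3 (V b) (V c)) (V k)
    else if i = b then - dot3 (cross3 (V a) (V c)) (V k)
    else if i = c then dot3 (cross3 (V a) (V b)) (V k)
    else - dot3 (cross3 (V a) (V b)) (V c))" for i
  have "coeff k = 0"
  proof (rule valid_linear_code_dependency[OF valid k(3) j, where A = "{a, b, c, k}"])
    show "\<forall>l<3. (\<Sum>i\<in>{a, b, c, k}. coeff i * V i l) = 0"
    proof (intro allI impI)
      fix l :: nat
      assume "l < 3"
      have "b \<noteq> a" "c \<noteq> a" "c \<noteq> b" "k \<noteq> a" "k \<noteq> b" "k \<noteq> c"
        using distinct \<open>k \<notin> {a, b, c}\<close> by auto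
      then show "(\<Sum>i\<in>{a, b, c, k}. coeff i * V i l) = 0"
        using cross3_cofactor_expansion[OF \<open>l < 3\<close>,
            where a = "V a" and b = "V b" and c = "V c" and k = "V k"]
        by (simp add: coeff_def) (simp add: algebra_simps)
    qed
  qed (use in_W k \<open>k \<notin> {a, b, c}\<close> in auto)
  with \<open>k \<notin> {a, b, c}\<close> show ?thesis
    by (simp add: coeff_def)
qed

lemma triangular_interfering_coplanar:
  fixes V :: "'m \<Rightarrow> nat \<Rightarrow> 'f::field"
  assumes ic: "ic_problem W R D S" and valid: "valid_linear_code W R D S 3 V"
    and T: "triangular_interfering W R D S T"
    and ab: "a \<in> T" "b \<in> T" "in_conflict W R D S a b"
  obtains c where "T = {a, b, c}" "dot3 (cross3 (V a) (V b)) (V c) = 0"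
proof -
  obtain j k where j: "j \<in> R" "k \<in> D j - T" "T \<subseteq> interf W D S j k" and "card T = 3"
    using T unfolding triangular_interfering_def by blast
  have "a \<noteq> b"
    using ab(3) by (simp add: in_conflict_def)
  with ab \<open>card T = 3\<close> have "card (T - {a, b}) = 1"
    by (simp add: card_Diff_subset card.infinite)
  then obtain c where c: "T - {a, b} = {c}"
    by (metis card_1_singletonE)
  then have "T = {a, b, c}" "c \<noteq> a" "c \<noteq> b"
    using ab by auto
  moreover from calculation have "dot3 (cross3 (V a) (V b)) (V c) = 0"
    using j \<open>a \<noteq> b\<close> by (intro interf_triangle_coplanar[OF ic valid, of j k]) auto
  ultimately show thesis
    using that by blast
qed

lemma conflict_cross3_nonzero:
  fixes V :: "'m \<Rightarrow> nat \<Rightarrow> 'f::field"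
  assumes "ic_problem W R D S" "valid_linear_code W R D S 3 V" "in_conflict W R D S a b"
  obtains i where "i < 3" "cross3 (V a) (V b) i \<noteq> 0"
  using conflict_not_parallel[OF assms] cross3_eq_0_iff by blast

text \<open>All messages of a type-2 alignment set have coding vectors in the plane spanned
  by the vectors of one conflicting pair: connectedness adds one vector at a time, always
  coplanar with two independent vectors already in the plane.\<close>
lemma type2_component_orthogonal:
  fixes V :: "'m \<Rightarrow> nat \<Rightarrow> 'f::field"
  assumes ic: "ic_problem W R D S" and valid: "valid_linear_code W R D S 3 V"
    and T0: "triangular_interfering W R D S T0"
    and pq: "p \<in> T0" "q \<in> T0" "in_conflict W R D S p q"
    and "(T0, T) \<in> (tri_adj W R D S)\<^sup>*"
  shows "\<forall>x\<in>T. dot3 (cross3 (V p) (V q)) (V x) = 0"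
  using \<open>(T0, T) \<in> _\<close>
proof (induction rule: rtrancl_induct)
  case base
  obtain c where "T0 = {p, q, c}" "dot3 (cross3 (V p) (V q)) (V c) = 0"
    using triangular_interfering_coplanar[OF ic valid T0 pq] .
  then show ?case
    by (simp add: dot3_cross3_left dot3_cross3_right)
next
  case (step T1 T2)
  then obtain a b where ab: "T1 \<inter> T2 = {a, b}" "in_conflict W R D S a b"
    and T2: "triangular_interfering W R D S T2"
    unfolding tri_adj_def by blast
  then obtain c where c: "T2 = {a, b, c}" "dot3 (cross3 (V a) (V b)) (V c) = 0"
    using triangular_interfering_coplanar[OF ic valid T2] by blast
  obtain i where "i < 3" "cross3 (V a) (V b) i \<noteq> 0"
    using conflict_cross3_nonzero[OF ic valid ab(2)] .
  with step.IH ab c show ?case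
    using dot3_eq_0_if_coplanar by blast
qed

lemma valid_linear_code_drop_coordinate:
  fixes V :: "'m \<Rightarrow> nat \<Rightarrow> 'f::field"
  assumes valid: "valid_linear_code W R D S 3 V"
    and plane: "\<forall>x\<in>W. dot3 n (V x) = 0" and "m < 3" "n m \<noteq> 0"
  shows "valid_linear_code W R D S 2 (\<lambda>x l. V x ((m + 1 + l) mod 3))"
  unfolding valid_linear_code_iff_kernel
proof (intro ballI allI impI)
  fix j k and w :: "'m \<Rightarrow> 'f"
  assume j: "j \<in> R" "k \<in> D j" and side: "\<forall>i\<in>S j. w i = 0"
    and "\<forall>l<2. (\<Sum>i\<in>W. w i * V i ((m + 1 + l) mod 3)) = 0"
  define s where "s l = (\<Sum>i\<in>W. w i * V i l)" for l
  have s_other: "s ((m + 1) mod 3) = 0" "s ((m + 2) mod 3) = 0"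
    using \<open>\<forall>l<2. _\<close> by (auto simp: s_def all_less_2_iff add.assoc)
  have "dot3 n s = (\<Sum>i\<in>W. w i * dot3 n (V i))"
    by (simp add: dot3_def s_def sum_distrib_left sum.distrib algebra_simps)
  also have "\<dots> = 0"
    using plane by simp
  finally have "n 0 * s 0 + n 1 * s 1 + n 2 * s 2 = 0"
    by (simp add: dot3_def)
  \<comment> \<open>Since n m \<noteq> 0, the coordinate m of the sum is determined by the other two.\<close>
  moreover have "m = 0 \<or> m = 1 \<or> m = 2"
    using \<open>m < 3\<close> by auto
  ultimately have "\<forall>l<3. s l = 0"
    using s_other \<open>n m \<noteq> 0\<close> by (auto simp: all_less_3_iff numeral_2_eq_2)
  with side show "w k = 0"
    using valid[unfolded valid_linear_code_iff_kernel, rule_format, OF j, of w]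
    by (simp add: s_def)
qed

theorem theorem6:
  fixes W :: "'m set" and R :: "'r set" and D S :: "'r \<Rightarrow> 'm set"
    and V :: "'m \<Rightarrow> nat \<Rightarrow> 'f::{field, finite}"
  assumes "ic_problem W R D S"
    and "valid_linear_code W R D S 3 V"
    and "type2_alignment_set W R D S C"
    and "W' = \<Union>C"
  shows "(\<exists>V2 :: 'm \<Rightarrow> nat \<Rightarrow> 'f. valid_linear_code W' (restr_receivers W' R D)
              (restr_map W' D) (restr_map W' S) 2 V2)
    \<and> \<not> (\<exists>a b. internal_conflict W' (restr_receivers W' R D) (restr_map W' D) (restr_map W' S) a b)"
proof -
  note ic = assms(1) and valid = assms(2)
  obtain T0 where T0: "triangular_interfering W R D S T0"
    and C: "C = {T. (T0, T) \<in> (tri_adj W R D S)\<^sup>*}"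
    using assms(3) unfolding type2_alignment_set_def by blast
  then obtain p q where pq: "p \<in> T0" "q \<in> T0" "in_conflict W R D S p q"
    unfolding triangular_interfering_def by blast
  obtain m where m: "m < 3" "cross3 (V p) (V q) m \<noteq> 0"
    using conflict_cross3_nonzero[OF ic valid pq(3)] .
  have "T \<subseteq> W" if "T \<in> C" for T
  proof -
    from \<open>T \<in> C\<close> have "(T0, T) \<in> (tri_adj W R D S)\<^sup>*"
      by (simp add: C)
    then have "triangular_interfering W R D S T"
      using T0 by (cases rule: rtranclE) (auto simp: tri_adj_def)
    then show ?thesis
      by (simp add: triangular_interfering_def)
  qed
  then have "W' \<subseteq> W"
    using assms(4) by blast
  have "\<forall>x\<in>W'. dot3 (cross3 (V p) (V q)) (V x) = 0"
    using type2_component_orthogonal[OF ic valid T0 pq] assms(4) C by blast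
  with valid_linear_code_restrict[OF valid _ \<open>W' \<subseteq> W\<close>] m ic
  have V2: "valid_linear_code W' (restr_receivers W' R D) (restr_map W' D) (restr_map W' S) 2
      (\<lambda>x l. V x ((m + 1 + l) mod 3))"
    by (intro valid_linear_code_drop_coordinate) (auto simp: ic_problem_def)
  then have "\<not> internal_conflict W' (restr_receivers W' R D) (restr_map W' D) (restr_map W' S) a b"
    for a b
    by (intro length2_code_no_internal_conflict ic_problem_restrict[OF ic \<open>W' \<subseteq> W\<close>])
  with V2 show ?thesis
    by blast
qed

end
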